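(* Let $F$ be a cumulative distribution function of a probability distribution supported on $\mathcal{S}$ which is Lipschitz continuous on $\mathcal{S}$, and let $\boldsymbol{X}_1,\boldsymbol{X}_2,\dots$ be i.i.d. with c.d.f. $F$. For $\boldsymbol{x}\in\mathcal{S}$ and $m\in\mathbb{N}$ let $$N_{\boldsymbol{x},m} := \Big\{\boldsymbol{k}\in\mathbb{N}_0^d\cap m\mathcal{S} : \max_{1\le i\le d}\big|\tfrac{k_i}{m}-x_i\big|\le\alpha_m\Big\}.$$ Then, for all $m=m(n)\ge2$ satisfying $m^{-1}\le\beta_{n,m}\le\alpha_m$, we have, as $n\to\infty$, $$\sup_{\boldsymbol{x}\in\mathrm{Int}(\mathcal{S})}\ \max_{\boldsymbol{k}\in N_{\boldsymbol{x},m}}\big|F_n(\boldsymbol{k}/m)-F(\boldsymbol{k}/m)-F_n(\boldsymbol{x})+F(\boldsymbol{x})\big| = \mathcal{O}(\beta_{n,m})\quad\text{almost surely}.$$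
   Context: Let $d\ge1$, $\|\boldsymbol{x}\|_1=\sum_i|x_i|$, $\mathcal{S}:=\{\boldsymbol{x}\in[0,1]^d:\|\boldsymbol{x}\|_1\le1\}$, $\mathrm{Int}(\mathcal{S}):=\{\boldsymbol{x}\in(0,1)^d:\|\boldsymbol{x}\|_1<1\}$, and $\mathbb{N}_0^d\cap m\mathcal{S}$ is the set of $\boldsymbol{k}\in\mathbb{N}_0^d$ with $\|\boldsymbol{k}\|_1\le m$. $F_n(\boldsymbol{x}) := n^{-1}\sum_{i=1}^n\mathbf{1}\{\boldsymbol{X}_i\le\boldsymbol{x}\}$ (componentwise inequality). Let $\alpha_n := (n^{-1}\log n)^{1/2}$ and $\beta_{n,m} := \alpha_n\sqrt{\alpha_m}$. *)

theory Defs
  imports "HOL-Probability.Probability"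
begin

definition simplexS :: "(real^'d::finite) set" where
  "simplexS = {x. (\<forall>i. 0 \<le> x$i \<and> x$i \<le> 1) \<and> (\<Sum>i\<in>UNIV. \<bar>x$i\<bar>) \<le> 1}"

definition simplexInt :: "(real^'d::finite) set" where
  "simplexInt = {x. (\<forall>i. 0 < x$i \<and> x$i < 1) \<and> (\<Sum>i\<in>UNIV. \<bar>x$i\<bar>) < 1}"

definition cdfv :: "(real^'d::finite) measure \<Rightarrow> real^'d \<Rightarrow> real" where
  "cdfv \<mu> x = measure \<mu> {y. \<forall>j. y$j \<le> x$j}"

definition empcdf :: "(nat \<Rightarrow> 'a \<Rightarrow> real^'d::finite) \<Rightarrow> nat \<Rightarrow> 'a \<Rightarrow> real^'d \<Rightarrow> real" where
  "empcdf X n \<omega> x = real (card {i\<in>{1..n}. \<forall>j. X i \<omega> $ j \<le> x $ j}) / real n"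

definition alpha :: "nat \<Rightarrow> real" where
  "alpha n = sqrt (ln (real n) / real n)"

definition beta :: "nat \<Rightarrow> nat \<Rightarrow> real" where
  "beta n m = alpha n * sqrt (alpha m)"

definition scalek :: "nat^'d::finite \<Rightarrow> nat \<Rightarrow> real^'d" where
  "scalek k m = (\<chi> i. real (k$i) / real m)"

definition Nxm :: "real^'d::finite \<Rightarrow> nat \<Rightarrow> (nat^'d) set" where
  "Nxm x m = {k. (\<Sum>i\<in>UNIV. k$i) \<le> m \<and> (\<forall>i. \<bar>real (k$i) / real m - x$i\<bar> \<le> alpha m)}"

end

theory Submission
  imports Defs
begin

text \<open>
  Write D(B) = (sum of 1_B(X_i) over i \<le> n) - n mu(B). The increment to be bounded is
  |D(O a) - D(O x)| / n, where O a is the lower orthant of a = k/m. Coordinatewise quantiles of mu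
  give at most (2m)^d boxes such that every orthant O x lies between two of them, A \<subseteq> O x \<subseteq> B,
  with mu(B - A) \<le> d/m; hence |D(O a) - D(O x)| exceeds max {|D(A) - D(O a)|, |D(B) - D(O a)|}
  by at most n d/m \<le> n d beta_{n,m}. Since F is Lipschitz and |a - x| \<le> alpha_m, the pairs (P, O a)
  occurring here have symmetric differences of measure O(alpha_m), and a Bernstein-type exponential
  bound with parameter beta_{n,m}/alpha_m shows that |D(P) - D(O a)| \<ge> C n beta_{n,m} has probability at
  most n^-(12d+2). As beta_{n,m} \<le> alpha_m forces m \<le> 4 n^4, there are at most n^(12d) such pairs, so
  the union bound and the Borel-Cantelli lemma conclude.
\<close>

section \<open>A Bernstein-type inequality for i.i.d. samples\<close>

lemma exp_le_quadratic:
  fixes u :: real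
  assumes "\<bar>u\<bar> \<le> 1"
  shows "exp u \<le> 1 + u + u\<^sup>2"
proof (cases "0 \<le> u")
  case True
  then show ?thesis using exp_bound[of u] assms by simp
next
  case False
  define v where "v = - u"
  have v: "0 \<le> v" "v \<le> 1" using False assms by (auto simp: v_def)
  have "1 \<le> 1 + v\<^sup>2 / 2 + v ^ 3 / 2 + v ^ 4 / 2" using v by simp
  also have "\<dots> = (1 - v + v\<^sup>2) * (1 + v + v\<^sup>2 / 2)" by (simp add: field_simps eval_nat_numeral)
  also have "\<dots> \<le> (1 - v + v\<^sup>2) * exp v"
    using exp_lower_Taylor_quadratic[OF v(1)] v by (intro mult_left_mono) auto
  finally show ?thesis by (simp add: v_def exp_minus field_simps)
qed

lemma (in prob_space) centered_exp_moment_le: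
  fixes g :: "'a \<Rightarrow> real"
  assumes [measurable]: "g \<in> borel_measurable M" and g_bounded: "\<And>y. \<bar>g y\<bar> \<le> 1"
    and l: "0 \<le> l" "l \<le> 1" and var: "expectation (\<lambda>y. (g y)\<^sup>2) \<le> V"
  shows "expectation (\<lambda>y. exp (l * (g y - expectation g))) \<le> exp (l\<^sup>2 * V)"
proof -
  define e where "e = expectation g"
  have int_g: "integrable M g"
    by (rule integrable_const_bound[where B=1]) (auto intro!: AE_I2 simp: g_bounded)
  have int_g2: "integrable M (\<lambda>y. (g y)\<^sup>2)"
    by (rule integrable_const_bound[where B=1]) (auto intro!: AE_I2 simp: abs_square_le_1 g_bounded)
  have int_exp: "integrable M (\<lambda>y. exp (l * g y))"
  proof (rule integrable_const_bound[where B="exp l"])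
    show "AE y in M. norm (exp (l * g y)) \<le> exp l"
      using g_bounded l by (intro AE_I2) (simp add: abs_le_iff mult_left_le)
  qed simp
  have "expectation (\<lambda>y. exp (l * g y)) \<le> expectation (\<lambda>y. 1 + l * g y + l\<^sup>2 * (g y)\<^sup>2)"
  proof (rule integral_mono[OF int_exp])
    show "integrable M (\<lambda>y. 1 + l * g y + l\<^sup>2 * (g y)\<^sup>2)" using int_g int_g2 by auto
    fix y
    have "\<bar>l * g y\<bar> \<le> 1" using g_bounded[of y] l by (simp add: abs_mult mult_le_one)
    then show "exp (l * g y) \<le> 1 + l * g y + l\<^sup>2 * (g y)\<^sup>2"
      by (metis exp_le_quadratic power_mult_distrib)
  qed
  also have "\<dots> = 1 + l * e + l\<^sup>2 * expectation (\<lambda>y. (g y)\<^sup>2)"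
    using int_g int_g2 by (simp add: e_def prob_space)
  also have "\<dots> \<le> 1 + l * e + l\<^sup>2 * V"
    using var by (simp add: mult_left_mono)
  also have "\<dots> \<le> exp (l * e + l\<^sup>2 * V)"
    using exp_ge_add_one_self[of "l * e + l\<^sup>2 * V"] by (simp add: add.assoc)
  finally have E_exp: "expectation (\<lambda>y. exp (l * g y)) \<le> exp (l * e) * exp (l\<^sup>2 * V)"
    by (simp add: exp_add)
  have "expectation (\<lambda>y. exp (l * (g y - e))) = exp (- (l * e)) * expectation (\<lambda>y. exp (l * g y))"
    by (simp add: right_diff_distrib exp_diff exp_minus field_simps)
  also have "\<dots> \<le> exp (- (l * e)) * (exp (l * e) * exp (l\<^sup>2 * V))"
    using E_exp by (rule mult_left_mono) simp
  also have "\<dots> = exp (l\<^sup>2 * V)"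
    by (simp add: exp_minus)
  finally show ?thesis
    by (simp add: e_def)
qed

definition sample_deviation :: "'b measure \<Rightarrow> (nat \<Rightarrow> 'a \<Rightarrow> 'b) \<Rightarrow> nat \<Rightarrow> 'a \<Rightarrow> 'b set \<Rightarrow> real" where
  "sample_deviation \<mu> X n \<omega> B = (\<Sum>i\<in>{1..n}. indicator B (X i \<omega>)) - real n * measure \<mu> B"

locale iid_sample = prob_space M for M :: "'a measure" +
  fixes \<mu> :: "'b::topological_space measure" and X :: "nat \<Rightarrow> 'a \<Rightarrow> 'b"
  assumes indep: "indep_vars (\<lambda>_. borel) X UNIV"
    and distr_X: "\<And>i. distr M borel (X i) = \<mu>"
    and X_measurable[measurable]: "\<And>i. X i \<in> borel_measurable M"
begin

lemma prob_space_mu: "prob_space \<mu>"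
  using prob_space_distr[OF X_measurable[of 0]] by (simp add: distr_X)

lemma sets_mu: "sets \<mu> = sets borel"
  by (metis distr_X sets_distr)

lemma exp_moment_sum:
  fixes g :: "'b \<Rightarrow> real"
  assumes [measurable]: "g \<in> borel_measurable borel" and g_bounded: "\<And>y. \<bar>g y\<bar> \<le> 1"
    and l: "0 \<le> l" "l \<le> 1" and var: "(\<integral>y. (g y)\<^sup>2 \<partial>\<mu>) \<le> V" and I: "finite I"
  defines "S \<omega> \<equiv> (\<Sum>i\<in>I. g (X i \<omega>)) - real (card I) * (\<integral>y. g y \<partial>\<mu>)"
  shows "integrable M (\<lambda>\<omega>. exp (l * S \<omega>))"
    and "expectation (\<lambda>\<omega>. exp (l * S \<omega>)) \<le> exp (real (card I) * l\<^sup>2 * V)"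
proof -
  interpret mu: prob_space \<mu> by (rule prob_space_mu)
  define e where "e = (\<integral>y. g y \<partial>\<mu>)"
  define Y where "Y i \<omega> = exp (l * (g (X i \<omega>) - e))" for i \<omega>
  have [measurable]: "Y i \<in> borel_measurable M" for i
    unfolding Y_def by measurable
  have int_Y: "integrable M (Y i)" for i
  proof (rule integrable_const_bound[where B="exp (l * (1 + \<bar>e\<bar>))"])
    have "g (X i \<omega>) - e \<le> 1 + \<bar>e\<bar>" for \<omega>
      using g_bounded[of "X i \<omega>"] by (simp add: abs_le_iff) linarith
    then show "AE \<omega> in M. norm (Y i \<omega>) \<le> exp (l * (1 + \<bar>e\<bar>))"
      using l by (intro AE_I2) (simp add: Y_def mult_left_mono)
  qed simp
  have E_Y: "expectation (Y i) \<le> exp (l\<^sup>2 * V)" for i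
  proof -
    have "expectation (Y i) = (\<integral>y. exp (l * (g y - e)) \<partial>distr M borel (X i))"
      unfolding Y_def by (simp add: integral_distr)
    also have "\<dots> \<le> exp (l\<^sup>2 * V)"
      unfolding distr_X e_def using var l g_bounded
      by (intro mu.centered_exp_moment_le) (auto simp: measurable_cong_sets[OF sets_mu refl])
    finally show ?thesis .
  qed
  have indep_Y: "indep_vars (\<lambda>_. borel) Y I"
    unfolding Y_def
    by (rule indep_vars_compose2[where X=X and M'="\<lambda>_. borel"]) (use indep_vars_subset[OF indep] in auto)
  have prod_Y: "exp (l * S \<omega>) = (\<Prod>i\<in>I. Y i \<omega>)" for \<omega>
    by (simp add: S_def e_def Y_def exp_sum[symmetric] I sum_distrib_left right_diff_distrib sum_subtractf)
  show "integrable M (\<lambda>\<omega>. exp (l * S \<omega>))"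
    unfolding prod_Y by (rule indep_vars_integrable[OF I indep_Y int_Y])
  have "expectation (\<lambda>\<omega>. \<Prod>i\<in>I. Y i \<omega>) = (\<Prod>i\<in>I. expectation (Y i))"
    by (rule indep_vars_lebesgue_integral[OF I indep_Y int_Y])
  also have "\<dots> \<le> (\<Prod>i\<in>I. exp (l\<^sup>2 * V))"
    by (rule prod_mono) (use E_Y in \<open>auto simp: Y_def intro!: integral_nonneg_AE\<close>)
  also have "\<dots> = exp (real (card I) * l\<^sup>2 * V)"
    by (simp add: exp_of_nat_mult[symmetric] mult.assoc)
  finally show "expectation (\<lambda>\<omega>. exp (l * S \<omega>)) \<le> exp (real (card I) * l\<^sup>2 * V)"
    unfolding prod_Y .
qed

lemma sum_upper_tail:
  fixes g :: "'b \<Rightarrow> real"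
  assumes [measurable]: "g \<in> borel_measurable borel" and g_bounded: "\<And>y. \<bar>g y\<bar> \<le> 1"
    and l: "0 < l" "l \<le> 1" and var: "(\<integral>y. (g y)\<^sup>2 \<partial>\<mu>) \<le> V" and I: "finite I"
  shows "prob {\<omega>\<in>space M. t \<le> (\<Sum>i\<in>I. g (X i \<omega>)) - real (card I) * (\<integral>y. g y \<partial>\<mu>)}
         \<le> exp (- l * t + real (card I) * l\<^sup>2 * V)"
proof -
  define S where "S \<omega> = (\<Sum>i\<in>I. g (X i \<omega>)) - real (card I) * (\<integral>y. g y \<partial>\<mu>)" for \<omega>
  note moment = exp_moment_sum[OF assms(1,2) less_imp_le[OF l(1)] l(2) var I, folded S_def]
  have "{\<omega>\<in>space M. t \<le> S \<omega>} = {\<omega>\<in>space M. exp (l * t) \<le> exp (l * S \<omega>)}"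
    using l by auto
  also have "prob \<dots> \<le> expectation (\<lambda>\<omega>. exp (l * S \<omega>)) / exp (l * t)"
    by (rule integral_Markov_inequality_measure[OF moment(1)]) (auto simp: S_def)
  also have "\<dots> \<le> exp (real (card I) * l\<^sup>2 * V) / exp (l * t)"
    by (rule divide_right_mono[OF moment(2)]) simp
  finally show ?thesis
    by (simp add: S_def exp_diff[symmetric])
qed

lemma deviation_difference_tail:
  assumes [measurable]: "B \<in> sets borel" "Q \<in> sets borel"
    and V: "measure \<mu> (sym_diff B Q) \<le> V" and l: "0 < l" "l \<le> 1"
  shows "prob {\<omega>\<in>space M. t \<le> \<bar>sample_deviation \<mu> X n \<omega> B - sample_deviation \<mu> X n \<omega> Q\<bar>}
         \<le> 2 * exp (- l * t + real n * l\<^sup>2 * V)"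
proof -
  interpret mu: prob_space \<mu> by (rule prob_space_mu)
  have [simp]: "B \<in> sets \<mu>" "Q \<in> sets \<mu>" "space \<mu> = UNIV"
    using sets_eq_imp_space_eq[OF sets_mu] by (simp_all add: sets_mu)
  define g :: "'b \<Rightarrow> real" where "g y = indicator B y - indicator Q y" for y
  have [measurable]: "g \<in> borel_measurable borel" "(\<lambda>y. - g y) \<in> borel_measurable borel"
    unfolding g_def by measurable
  have g_bounded: "\<bar>g y\<bar> \<le> 1" "\<bar>- g y\<bar> \<le> 1" for y by (auto simp: g_def indicator_def)
  have "(g y)\<^sup>2 = indicator (sym_diff B Q) y" for y by (auto simp: g_def indicator_def)
  then have var: "(\<integral>y. (g y)\<^sup>2 \<partial>\<mu>) \<le> V" "(\<integral>y. (- g y)\<^sup>2 \<partial>\<mu>) \<le> V"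
    using V by simp_all
  have mean: "(\<integral>y. g y \<partial>\<mu>) = measure \<mu> B - measure \<mu> Q"
    unfolding g_def by (simp add: Bochner_Integration.integral_diff integrable_real_indicator mu.emeasure_eq_measure)
  have tail: "prob {\<omega>\<in>space M. t \<le> (\<Sum>i\<in>{1..n}. h (X i \<omega>)) - real n * (\<integral>y. h y \<partial>\<mu>)}
      \<le> exp (- l * t + real n * l\<^sup>2 * V)"
    if "h \<in> borel_measurable borel" "\<And>y. \<bar>h y\<bar> \<le> 1" "(\<integral>y. (h y)\<^sup>2 \<partial>\<mu>) \<le> V" for h
    using sum_upper_tail[OF that(1,2) l that(3), of "{1..n}" t] by simp
  define Z where "Z \<omega> = (\<Sum>i\<in>{1..n}. g (X i \<omega>)) - real n * (\<integral>y. g y \<partial>\<mu>)" for \<omega>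
  have neg_Z: "- Z \<omega> = (\<Sum>i\<in>{1..n}. - g (X i \<omega>)) - real n * (\<integral>y. - g y \<partial>\<mu>)" for \<omega>
    by (simp add: Z_def sum_negf)
  have "sample_deviation \<mu> X n \<omega> B - sample_deviation \<mu> X n \<omega> Q = Z \<omega>" for \<omega>
    unfolding Z_def mean by (simp add: g_def sample_deviation_def sum_subtractf algebra_simps)
  then have "{\<omega>\<in>space M. t \<le> \<bar>sample_deviation \<mu> X n \<omega> B - sample_deviation \<mu> X n \<omega> Q\<bar>}
      = {\<omega>\<in>space M. t \<le> Z \<omega>} \<union> {\<omega>\<in>space M. t \<le> - Z \<omega>}"
    by (auto simp: abs_if)
  also have "prob \<dots> \<le> prob {\<omega>\<in>space M. t \<le> Z \<omega>} + prob {\<omega>\<in>space M. t \<le> - Z \<omega>}"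
    by (rule measure_Un_le) (simp_all add: Z_def)
  also have "\<dots> \<le> exp (- l * t + real n * l\<^sup>2 * V) + exp (- l * t + real n * l\<^sup>2 * V)"
    unfolding neg_Z unfolding Z_def using g_bounded var by (intro add_mono tail) simp_all
  finally show ?thesis by simp
qed

lemma AE_eventually_deviations_less:
  fixes \<P> :: "nat \<Rightarrow> ('b set \<times> 'b set) set"
  assumes ev: "eventually (\<lambda>n. finite (\<P> n) \<and> \<P> n \<subseteq> sets borel \<times> sets borel \<and> 0 < l n \<and> l n \<le> 1
      \<and> (\<forall>(B, Q)\<in>\<P> n. measure \<mu> (sym_diff B Q) \<le> V n)) sequentially"
    and summable: "summable (\<lambda>n. real (card (\<P> n)) * exp (- l n * t n + real n * (l n)\<^sup>2 * V n))"
  shows "AE \<omega> in M. eventually (\<lambda>n. \<forall>(B, Q)\<in>\<P> n.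
           \<bar>sample_deviation \<mu> X n \<omega> B - sample_deviation \<mu> X n \<omega> Q\<bar> < t n) sequentially"
proof -
  obtain N where N: "\<And>n. N \<le> n \<Longrightarrow> finite (\<P> n) \<and> \<P> n \<subseteq> sets borel \<times> sets borel \<and> 0 < l n \<and> l n \<le> 1
      \<and> (\<forall>(B, Q)\<in>\<P> n. measure \<mu> (sym_diff B Q) \<le> V n)"
    using ev unfolding eventually_sequentially by blast
  define bad where "bad n p = {\<omega>\<in>space M.
      t n \<le> \<bar>sample_deviation \<mu> X n \<omega> (fst p) - sample_deviation \<mu> X n \<omega> (snd p)\<bar>}" for n p
  define E where "E n = (if N \<le> n then \<Union>p\<in>\<P> n. bad n p else {})" for n
  have bad_sets: "bad n p \<in> sets M" if "p \<in> sets borel \<times> sets borel" for n p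
  proof -
    have [measurable]: "fst p \<in> sets borel" "snd p \<in> sets borel" using that by auto
    show ?thesis unfolding bad_def sample_deviation_def by measurable
  qed
  have E_sets: "E n \<in> sets M" for n
  proof (cases "N \<le> n")
    case True
    with N[OF True] show ?thesis
      unfolding E_def by (auto intro!: sets.finite_UN bad_sets)
  qed (simp add: E_def)
  have E_le: "prob (E n) \<le> 2 * (real (card (\<P> n)) * exp (- l n * t n + real n * (l n)\<^sup>2 * V n))"
    if "N \<le> n" for n
  proof -
    note Nn = N[OF that]
    have "prob (E n) \<le> (\<Sum>p\<in>\<P> n. prob (bad n p))"
      using that Nn bad_sets by (auto simp: E_def intro!: measure_UNION_le)
    also have "\<dots> \<le> (\<Sum>p\<in>\<P> n. 2 * exp (- l n * t n + real n * (l n)\<^sup>2 * V n))"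
      using Nn unfolding bad_def by (intro sum_mono deviation_difference_tail) auto
    finally show ?thesis by simp
  qed
  have "summable (\<lambda>n. prob (E n))"
    by (rule summable_comparison_test'[OF summable_mult[OF summable, of 2], of N])
       (metis E_le measure_nonneg real_norm_def abs_of_nonneg)
  then have "AE \<omega> in M. eventually (\<lambda>n. \<omega> \<in> space M - E n) sequentially"
    by (intro borel_cantelli_AE1 E_sets) (simp_all add: emeasure_eq_measure)
  then show ?thesis
  proof (rule eventually_mono)
    fix \<omega> assume "eventually (\<lambda>n. \<omega> \<in> space M - E n) sequentially"
    then show "eventually (\<lambda>n. \<forall>(B, Q)\<in>\<P> n.
        \<bar>sample_deviation \<mu> X n \<omega> B - sample_deviation \<mu> X n \<omega> Q\<bar> < t n) sequentially"
      using eventually_ge_at_top[of N]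
      by eventually_elim (auto simp: E_def bad_def not_le)
  qed
qed

end

section \<open>Bracketing orthants by marginal quantiles\<close>

lemma (in real_distribution) quantile_exists:
  assumes q: "0 < q" "q < 1"
  shows "\<exists>r. (\<forall>x. q \<le> cdf M x \<longleftrightarrow> r \<le> x) \<and> measure M {..<r} \<le> q"
proof -
  define S where "S = {t. q \<le> cdf M t}"
  obtain t0 where "q < cdf M t0"
    using order_tendstoD(1)[OF cdf_lim_at_top_prob q(2)] by (auto simp: eventually_at_top_linorder)
  then have S_nonempty: "S \<noteq> {}" by (auto simp: S_def intro!: less_imp_le)
  obtain t1 where t1: "\<And>t. t \<le> t1 \<Longrightarrow> cdf M t < q"
    using order_tendstoD(2)[OF cdf_lim_at_bot q(1)] by (auto simp: eventually_at_bot_linorder)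
  have bdd: "bdd_below S"
  proof (rule bdd_belowI)
    fix s assume "s \<in> S"
    then show "t1 \<le> s" using t1[of s] by (force simp: S_def)
  qed
  define r where "r = Inf S"
  have "q \<le> cdf M r"
  proof (rule tendsto_lowerbound)
    show "(cdf M \<longlongrightarrow> cdf M r) (at_right r)"
      using cdf_is_right_cont[of r] by (simp add: continuous_within)
    show "eventually (\<lambda>t. q \<le> cdf M t) (at_right r)"
    proof (rule eventually_at_right_less[THEN eventually_mono])
      fix t assume "r < t"
      then obtain s where "s \<in> S" "s < t" using cInf_less_iff[OF S_nonempty bdd] by (auto simp: r_def)
      then show "q \<le> cdf M t" using cdf_nondecreasing[of s t] by (auto simp: S_def)
    qed
  qed simp
  then have iff: "q \<le> cdf M x \<longleftrightarrow> r \<le> x" for x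
    using cInf_lower[OF _ bdd, of x] cdf_nondecreasing[of r x] by (auto simp: S_def r_def)
  have "measure M {..<r} \<le> q"
  proof (rule tendsto_upperbound)
    show "(cdf M \<longlongrightarrow> measure M {..<r}) (at_left r)" by (rule cdf_at_left)
    show "eventually (\<lambda>t. cdf M t \<le> q) (at_left r)"
    proof (rule eventually_at_left_real[of "r - 1" r, THEN eventually_mono])
      fix t assume "t \<in> {r - 1<..<r}"
      then show "cdf M t \<le> q" using iff[of t] by auto
    qed simp
  qed simp
  with iff show ?thesis by blast
qed

lemma exists_grid_level:
  fixes c :: real
  assumes K: "0 < K" and c: "0 \<le> c"
  shows "\<exists>j<K. real j / real K \<le> c \<and> (j \<noteq> K - 1 \<longrightarrow> c < real (j + 1) / real K)"
proof -
  define j where "j = min (K - 1) (nat \<lfloor>real K * c\<rfloor>)"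
  have "real (nat \<lfloor>real K * c\<rfloor>) \<le> real K * c"
    using c by simp
  then have "real j \<le> real K * c"
    unfolding j_def by linarith
  moreover have "real K * c < real j + 1" if "j \<noteq> K - 1"
  proof -
    have "j = nat \<lfloor>real K * c\<rfloor>" using that by (auto simp: j_def)
    then show ?thesis using c by linarith
  qed
  moreover have "j < K"
    using K by (simp add: j_def)
  ultimately show ?thesis
    using K by (auto simp: divide_le_eq less_divide_eq mult.commute)
qed

definition quantile_brackets :: "(nat \<Rightarrow> real) \<Rightarrow> nat \<Rightarrow> real set set" where
  "quantile_brackets r K = {{}, UNIV} \<union> (\<lambda>j. {..r j}) ` {1..<K} \<union> (\<lambda>j. {..<r j}) ` {1..<K}"

lemma quantile_brackets_finite: "finite (quantile_brackets r K)"
  by (simp add: quantile_brackets_def)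

lemma quantile_brackets_borel: "quantile_brackets r K \<subseteq> sets borel"
  by (auto simp: quantile_brackets_def)

lemma card_quantile_brackets_le:
  assumes "0 < K" shows "card (quantile_brackets r K) \<le> 2 * K"
proof -
  have "card (quantile_brackets r K)
      \<le> card {{}, UNIV :: real set} + card ((\<lambda>j. {..r j}) ` {1..<K}) + card ((\<lambda>j. {..<r j}) ` {1..<K})"
    unfolding quantile_brackets_def by (meson card_Un_le add_le_mono order_trans le_refl)
  also have "\<dots> \<le> 2 + (K - 1) + (K - 1)"
    by (intro add_mono card_image_le[THEN order_trans]) (auto simp: card_insert_le_m1)
  finally show ?thesis using assms by linarith
qed

lemma (in real_distribution) quantile_brackets_cover:
  assumes K: "0 < K"
    and r: "\<And>j x. j \<in> {1..<K} \<Longrightarrow> real j / real K \<le> cdf M x \<longleftrightarrow> r j \<le> x"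
    and r_below: "\<And>j. j \<in> {1..<K} \<Longrightarrow> measure M {..<r j} \<le> real j / real K"
  shows "\<exists>L\<in>quantile_brackets r K. \<exists>U\<in>quantile_brackets r K.
           L \<subseteq> {..x} \<and> {..x} \<subseteq> U \<and> measure M (U - L) \<le> 1 / real K"
proof -
  obtain j where "j < K" and j_le: "real j / real K \<le> cdf M x"
    and j_lt: "j \<noteq> K - 1 \<Longrightarrow> cdf M x < real (j + 1) / real K"
    using exists_grid_level[OF K cdf_nonneg] by blast
  define L where "L = (if j = 0 then {} else {..r j})"
  define U where "U = (if j = K - 1 then UNIV else {..<r (j + 1)})"
  have LU: "L \<in> quantile_brackets r K" "U \<in> quantile_brackets r K"
    using \<open>j < K\<close> by (auto simp: L_def U_def quantile_brackets_def)
  have Lx: "L \<subseteq> {..x}"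
    using r[of j x] j_le \<open>j < K\<close> by (auto simp: L_def)
  have xU: "{..x} \<subseteq> U"
  proof (cases "j = K - 1")
    case False
    then have "j + 1 \<in> {1..<K}" using \<open>j < K\<close> by auto
    then have "x < r (j + 1)" using r[of "j + 1" x] j_lt[OF False] by linarith
    then show ?thesis using False by (auto simp: U_def)
  qed (simp add: U_def)
  have "measure M U \<le> real (j + 1) / real K"
  proof (cases "j = K - 1")
    case True
    then show ?thesis using K by (simp add: U_def of_nat_diff)
  next
    case False
    then show ?thesis using r_below[of "j + 1"] \<open>j < K\<close> by (simp add: U_def)
  qed
  moreover have "real j / real K \<le> measure M L"
    using r[of j "r j"] \<open>j < K\<close> by (auto simp: L_def cdf_def)
  moreover have "measure M (U - L) = measure M U - measure M L"
    using Lx xU LU quantile_brackets_borel[of r K] by (intro finite_measure_Diff) blast+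
  ultimately have "measure M (U - L) \<le> real (j + 1) / real K - real j / real K"
    by linarith
  also have "\<dots> = 1 / real K"
    by (simp add: diff_divide_distrib[symmetric])
  finally have "measure M (U - L) \<le> 1 / real K" .
  with LU Lx xU show ?thesis by blast
qed

lemma (in real_distribution) exists_cdf_bracketing:
  assumes K: "0 < K"
  shows "\<exists>H. finite H \<and> card H \<le> 2 * K \<and> H \<subseteq> sets borel \<and>
           (\<forall>x. \<exists>L\<in>H. \<exists>U\<in>H. L \<subseteq> {..x} \<and> {..x} \<subseteq> U \<and> measure M (U - L) \<le> 1 / real K)"
proof -
  have "\<forall>j\<in>{1..<K}. \<exists>t. (\<forall>x. real j / real K \<le> cdf M x \<longleftrightarrow> t \<le> x) \<and> measure M {..<t} \<le> real j / real K"
    by (intro ballI quantile_exists) auto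
  then obtain r where r: "\<And>j x. j \<in> {1..<K} \<Longrightarrow> real j / real K \<le> cdf M x \<longleftrightarrow> r j \<le> x"
    and r_below: "\<And>j. j \<in> {1..<K} \<Longrightarrow> measure M {..<r j} \<le> real j / real K"
    by metis
  show ?thesis
    using quantile_brackets_cover[OF K r r_below] card_quantile_brackets_le[OF K]
    by (intro exI[of _ "quantile_brackets r K"]) (simp add: quantile_brackets_finite quantile_brackets_borel)
qed

definition lower_orthant :: "real^'d::finite \<Rightarrow> (real^'d) set" where
  "lower_orthant a = {y. \<forall>j. y$j \<le> a$j}"

definition coord_prod :: "('d::finite \<Rightarrow> real set) \<Rightarrow> (real^'d) set" where
  "coord_prod A = {y. \<forall>j. y$j \<in> A j}"

lemma coord_prod_borel:
  fixes A :: "'d::finite \<Rightarrow> real set"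
  assumes "\<And>j. A j \<in> sets borel"
  shows "coord_prod A \<in> sets borel"
proof -
  have "coord_prod A = (\<Inter>j. (\<lambda>y::real^'d. y$j) -` A j \<inter> space borel)"
    by (auto simp: coord_prod_def)
  also have "\<dots> \<in> sets borel"
    using assms by (intro sets.countable_INT') (auto intro: measurable_sets_borel[OF borel_measurable_nth])
  finally show ?thesis .
qed

lemma lower_orthant_borel[measurable]: "lower_orthant a \<in> sets borel"
proof -
  have "lower_orthant a = coord_prod (\<lambda>j. {..a$j})"
    by (auto simp: lower_orthant_def coord_prod_def)
  then show ?thesis by (simp add: coord_prod_borel)
qed

lemma cdfv_eq_measure_lower_orthant: "cdfv \<mu> x = measure \<mu> (lower_orthant x)"
  by (simp add: cdfv_def lower_orthant_def)

definition orthant_bracketing :: "(real^'d::finite) measure \<Rightarrow> ('d \<Rightarrow> real set set) \<Rightarrow> real \<Rightarrow> bool" where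
  "orthant_bracketing \<mu> H \<epsilon> \<longleftrightarrow> (\<forall>j. finite (H j) \<and> H j \<subseteq> sets borel) \<and>
     (\<forall>x. \<exists>A B. (\<forall>j. A j \<in> H j \<and> B j \<in> H j) \<and> coord_prod A \<subseteq> lower_orthant x
        \<and> lower_orthant x \<subseteq> coord_prod B \<and> measure \<mu> (coord_prod B - coord_prod A) \<le> \<epsilon>)"

lemma measure_coord_prod_diff_le:
  fixes \<mu> :: "(real^'d::finite) measure"
  assumes "finite_measure \<mu>" and sets: "sets \<mu> = sets borel"
    and [measurable]: "\<And>j. A j \<in> sets borel" "\<And>j. B j \<in> sets borel"
  shows "measure \<mu> (coord_prod B - coord_prod A) \<le> (\<Sum>j\<in>UNIV. measure (distr \<mu> borel (\<lambda>y. y$j)) (B j - A j))"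
proof -
  interpret finite_measure \<mu> by fact
  have [measurable]: "(\<lambda>y::real^'d. y$j) \<in> borel_measurable \<mu>" for j
    by (simp add: measurable_cong_sets[OF sets refl])
  have space: "space \<mu> = UNIV" using sets_eq_imp_space_eq[OF sets] by simp
  have [simp]: "(\<lambda>y::real^'d. y$j) -` S \<in> sets \<mu>" if "S \<in> sets borel" for j S
    using measurable_sets_borel[OF borel_measurable_nth that] by (simp add: sets)
  have "coord_prod B - coord_prod A \<subseteq> (\<Union>j. (\<lambda>y. y$j) -` (B j - A j))"
    by (auto simp: coord_prod_def)
  then have "measure \<mu> (coord_prod B - coord_prod A) \<le> measure \<mu> (\<Union>j. (\<lambda>y. y$j) -` (B j - A j))"
    by (intro finite_measure_mono sets.finite_UN) auto
  also have "\<dots> \<le> (\<Sum>j\<in>UNIV. measure \<mu> ((\<lambda>y. y$j) -` (B j - A j)))"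
    by (intro measure_UNION_le) auto
  also have "\<dots> = (\<Sum>j\<in>UNIV. measure (distr \<mu> borel (\<lambda>y. y$j)) (B j - A j))"
    by (simp add: measure_distr space)
  finally show ?thesis .
qed

lemma exists_orthant_bracketing:
  fixes \<mu> :: "(real^'d::finite) measure"
  assumes "prob_space \<mu>" and sets: "sets \<mu> = sets borel" and K: "0 < K"
  shows "\<exists>H. orthant_bracketing \<mu> H (real CARD('d) / real K) \<and> (\<forall>j. card (H j) \<le> 2 * K)"
proof -
  interpret prob_space \<mu> by fact
  define \<nu> where "\<nu> j = distr \<mu> borel (\<lambda>y. y$j)" for j
  have marginal: "real_distribution (\<nu> j)" for j
    unfolding \<nu>_def by (intro real_distribution_distr) (simp add: measurable_cong_sets[OF sets refl])
  have "\<forall>j. \<exists>H. finite H \<and> card H \<le> 2 * K \<and> H \<subseteq> sets borel \<and>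
      (\<forall>x. \<exists>L\<in>H. \<exists>U\<in>H. L \<subseteq> {..x} \<and> {..x} \<subseteq> U \<and> measure (\<nu> j) (U - L) \<le> 1 / real K)"
    using real_distribution.exists_cdf_bracketing[OF marginal K] by blast
  then obtain H where H: "\<And>j. finite (H j) \<and> card (H j) \<le> 2 * K \<and> H j \<subseteq> sets borel"
    and cover: "\<And>j x. \<exists>L\<in>H j. \<exists>U\<in>H j. L \<subseteq> {..x} \<and> {..x} \<subseteq> U \<and> measure (\<nu> j) (U - L) \<le> 1 / real K"
    by metis
  have "\<exists>A B. (\<forall>j. A j \<in> H j \<and> B j \<in> H j) \<and> coord_prod A \<subseteq> lower_orthant x
      \<and> lower_orthant x \<subseteq> coord_prod B \<and> measure \<mu> (coord_prod B - coord_prod A) \<le> real CARD('d) / real K" for x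
  proof -
    have "\<forall>j. \<exists>L U. L \<in> H j \<and> U \<in> H j \<and> L \<subseteq> {..x$j} \<and> {..x$j} \<subseteq> U
        \<and> measure (\<nu> j) (U - L) \<le> 1 / real K"
      using cover by blast
    then obtain A B where AB: "\<And>j. A j \<in> H j" "\<And>j. B j \<in> H j"
      and sub: "\<And>j. A j \<subseteq> {..x$j}" "\<And>j. {..x$j} \<subseteq> B j"
      and gap: "\<And>j. measure (\<nu> j) (B j - A j) \<le> 1 / real K"
      by metis
    have borel: "A j \<in> sets borel" "B j \<in> sets borel" for j
      using AB H by blast+
    have "measure \<mu> (coord_prod B - coord_prod A) \<le> (\<Sum>j\<in>UNIV. measure (\<nu> j) (B j - A j))"
      unfolding \<nu>_def by (rule measure_coord_prod_diff_le[OF finite_measure_axioms sets borel])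
    also have "\<dots> \<le> (\<Sum>j\<in>(UNIV::'d set). 1 / real K)"
      by (intro sum_mono gap)
    finally have "measure \<mu> (coord_prod B - coord_prod A) \<le> real CARD('d) / real K"
      by simp
    moreover have "coord_prod A \<subseteq> lower_orthant x" "lower_orthant x \<subseteq> coord_prod B"
      using sub by (auto simp: coord_prod_def lower_orthant_def subset_iff)
    ultimately show ?thesis
      using AB by (intro exI[of _ A] exI[of _ B]) simp
  qed
  then show ?thesis
    using H unfolding orthant_bracketing_def by (intro exI[of _ H]) simp
qed

section \<open>Increments of the empirical distribution function on a lattice\<close>

lemma sample_deviation_sandwich:
  assumes "finite_measure \<mu>" and sets: "A \<in> sets \<mu>" "S \<in> sets \<mu>" "B \<in> sets \<mu>"
    and sub: "A \<subseteq> S" "S \<subseteq> B"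
  shows "sample_deviation \<mu> X n \<omega> A - real n * measure \<mu> (B - A) \<le> sample_deviation \<mu> X n \<omega> S"
    and "sample_deviation \<mu> X n \<omega> S \<le> sample_deviation \<mu> X n \<omega> B + real n * measure \<mu> (B - A)"
proof -
  interpret finite_measure \<mu> by fact
  have counts: "(\<Sum>i\<in>{1..n}. indicator A (X i \<omega>)) \<le> (\<Sum>i\<in>{1..n}. indicator S (X i \<omega>) :: real)"
      "(\<Sum>i\<in>{1..n}. indicator S (X i \<omega>)) \<le> (\<Sum>i\<in>{1..n}. indicator B (X i \<omega>) :: real)"
    using sub by (intro sum_mono; auto simp: indicator_def)+
  have "measure \<mu> (B - A) = measure \<mu> B - measure \<mu> A"
    using sets sub by (intro finite_measure_Diff) auto
  moreover have "real n * measure \<mu> A \<le> real n * measure \<mu> S" "real n * measure \<mu> S \<le> real n * measure \<mu> B"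
    using sets sub by (auto intro!: mult_left_mono finite_measure_mono)
  ultimately show "sample_deviation \<mu> X n \<omega> A - real n * measure \<mu> (B - A) \<le> sample_deviation \<mu> X n \<omega> S"
    and "sample_deviation \<mu> X n \<omega> S \<le> sample_deviation \<mu> X n \<omega> B + real n * measure \<mu> (B - A)"
    using counts by (simp_all add: sample_deviation_def right_diff_distrib)
qed

lemma sample_deviation_diff_le_bracket:
  assumes "finite_measure \<mu>" and sets: "A \<in> sets \<mu>" "S \<in> sets \<mu>" "B \<in> sets \<mu>"
    and sub: "A \<subseteq> S" "S \<subseteq> B" and gap: "measure \<mu> (B - A) \<le> G"
    and dev: "\<bar>sample_deviation \<mu> X n \<omega> A - sample_deviation \<mu> X n \<omega> Q\<bar> < T"
      "\<bar>sample_deviation \<mu> X n \<omega> B - sample_deviation \<mu> X n \<omega> Q\<bar> < T"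
  shows "\<bar>sample_deviation \<mu> X n \<omega> Q - sample_deviation \<mu> X n \<omega> S\<bar> \<le> T + real n * G"
  using sample_deviation_sandwich[OF assms(1-6), where X=X and n=n and \<omega>=\<omega>]
    mult_left_mono[OF gap, of "real n"] dev
  unfolding abs_le_iff abs_less_iff by (intro conjI) linarith+

lemma measure_sym_diff_le_bracket:
  assumes "finite_measure \<mu>" and sets: "A \<in> sets \<mu>" "B \<in> sets \<mu>" "S \<in> sets \<mu>" "Q \<in> sets \<mu>"
    and sub: "A \<subseteq> P" "P \<subseteq> B" "A \<subseteq> S" "S \<subseteq> B"
  shows "measure \<mu> (sym_diff P Q) \<le> measure \<mu> (B - A) + measure \<mu> (S - Q) + measure \<mu> (Q - S)"
proof -
  interpret finite_measure \<mu> by fact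
  have "measure \<mu> (sym_diff P Q) \<le> measure \<mu> ((B - A) \<union> (S - Q) \<union> (Q - S))"
    using sets sub by (intro finite_measure_mono) auto
  also have "\<dots> \<le> measure \<mu> ((B - A) \<union> (S - Q)) + measure \<mu> (Q - S)"
    using sets by (intro measure_Un_le) auto
  also have "measure \<mu> ((B - A) \<union> (S - Q)) \<le> measure \<mu> (B - A) + measure \<mu> (S - Q)"
    using sets by (intro measure_Un_le) auto
  finally show ?thesis by simp
qed

lemma empcdf_deviation:
  "real n * (empcdf X n \<omega> x - cdfv \<mu> x) = sample_deviation \<mu> X n \<omega> (lower_orthant x)"
proof -
  have "real (card {i\<in>{1..n}. X i \<omega> \<in> lower_orthant x}) = (\<Sum>i\<in>{i\<in>{1..n}. X i \<omega> \<in> lower_orthant x}. 1)"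
    by simp
  also have "\<dots> = (\<Sum>i\<in>{1..n}. if X i \<omega> \<in> lower_orthant x then 1 else 0)"
    by (rule sum.inter_filter) simp
  also have "\<dots> = (\<Sum>i\<in>{1..n}. indicator (lower_orthant x) (X i \<omega>))"
    by (intro sum.cong) (auto simp: indicator_def)
  finally show ?thesis
    by (cases "n = 0") (simp_all add: empcdf_def sample_deviation_def cdfv_eq_measure_lower_orthant algebra_simps,
        simp add: lower_orthant_def)
qed

lemma measure_lower_orthant_diff_le:
  fixes \<mu> :: "(real^'d::finite) measure"
  assumes "finite_measure \<mu>" and sets: "sets \<mu> = sets borel"
    and Lip: "L-lipschitz_on simplexS (cdfv \<mu>)"
    and a: "a \<in> simplexS" and x: "x \<in> simplexS" and close: "\<And>j. \<bar>a$j - x$j\<bar> \<le> h"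
  shows "measure \<mu> (lower_orthant a - lower_orthant x) \<le> L * (real CARD('d) * h)"
proof -
  interpret finite_measure \<mu> by fact
  define u where "u = (\<chi> j. min (x$j) (a$j))"
  have u: "u \<in> simplexS"
  proof -
    have "\<bar>u$j\<bar> \<le> \<bar>x$j\<bar>" "0 \<le> u$j" "u$j \<le> 1" for j
      using x a by (auto simp: u_def simplexS_def min_def)
    moreover have "(\<Sum>j\<in>UNIV. \<bar>u$j\<bar>) \<le> (\<Sum>j\<in>UNIV. \<bar>x$j\<bar>)"
      by (rule sum_mono) (use calculation in auto)
    ultimately show ?thesis using x by (auto simp: simplexS_def)
  qed
  have "lower_orthant a - lower_orthant x = lower_orthant a - lower_orthant u"
    by (auto simp: lower_orthant_def u_def)
  also have "measure \<mu> \<dots> = cdfv \<mu> a - cdfv \<mu> u"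
    unfolding cdfv_eq_measure_lower_orthant
    by (rule finite_measure_Diff) (auto simp: sets lower_orthant_def u_def)
  also have "\<dots> \<le> L * dist a u"
    using lipschitz_onD[OF Lip a u] by (simp add: dist_real_def)
  also have "\<dots> \<le> L * (real CARD('d) * h)"
  proof (rule mult_left_mono[OF _ lipschitz_on_nonneg[OF Lip]])
    have "dist a u \<le> (\<Sum>j\<in>UNIV. \<bar>(a - u)$j\<bar>)"
      unfolding dist_norm by (rule norm_le_l1_cart)
    also have "\<dots> \<le> (\<Sum>j\<in>(UNIV::'d set). h)"
    proof (rule sum_mono)
      fix j show "\<bar>(a - u)$j\<bar> \<le> h" using close[of j] by (auto simp: u_def)
    qed
    finally show "dist a u \<le> real CARD('d) * h" by simp
  qed
  finally show ?thesis .
qed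

lemma simplexInt_subset_simplexS: "simplexInt \<subseteq> simplexS"
  by (auto simp: simplexInt_def simplexS_def less_imp_le)

lemma Nxm_le: "k \<in> Nxm x m \<Longrightarrow> k$j \<le> m"
  using member_le_sum[of j UNIV "\<lambda>j. k$j"] by (simp add: Nxm_def)

lemma Nxm_abs_le: "k \<in> Nxm x m \<Longrightarrow> \<bar>scalek k m $ j - x$j\<bar> \<le> alpha m"
  by (simp add: Nxm_def scalek_def)

lemma scalek_in_simplexS:
  assumes k: "k \<in> Nxm x m"
  shows "scalek k m \<in> simplexS"
proof -
  have "(\<Sum>j\<in>UNIV. k$j) \<le> m"
    using k by (simp add: Nxm_def)
  then have "real (\<Sum>j\<in>UNIV. k$j) / real m \<le> 1"
    by (auto simp: divide_le_eq_1 simp del: of_nat_sum)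
  then show ?thesis
    using Nxm_le[OF k] by (auto simp: simplexS_def scalek_def divide_le_eq_1 sum_divide_distrib)
qed

lemma card_lattice_box:
  "finite {k :: nat^'d::finite. \<forall>j. k$j \<le> m}" "card {k :: nat^'d::finite. \<forall>j. k$j \<le> m} = (m + 1) ^ CARD('d)"
proof -
  have "k \<in> vec_lambda ` PiE UNIV (\<lambda>_. {..m})" if "\<forall>j. k$j \<le> m" for k :: "nat^'d"
    using that by (intro image_eqI[of _ _ "vec_nth k"]) (auto simp: vec_nth_inverse)
  then have "{k :: nat^'d. \<forall>j. k$j \<le> m} = vec_lambda ` PiE UNIV (\<lambda>_. {..m})"
    by auto
  moreover have "inj_on vec_lambda (PiE UNIV (\<lambda>_::'d. {..m}))"
    by (intro inj_onI) (metis vec_lambda_beta ext)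
  ultimately show "finite {k :: nat^'d. \<forall>j. k$j \<le> m}" "card {k :: nat^'d. \<forall>j. k$j \<le> m} = (m + 1) ^ CARD('d)"
    by (simp_all add: card_image card_PiE finite_PiE)
qed

text \<open>Only pairs whose symmetric difference is small are kept: this is the variance proxy in the
  exponential bound, and it is what makes the rate beta_{n,m} rather than alpha_n possible.\<close>

definition lattice_bracket_pairs ::
    "(real^'d::finite) measure \<Rightarrow> ('d \<Rightarrow> real set set) \<Rightarrow> nat \<Rightarrow> real \<Rightarrow> ((real^'d) set \<times> (real^'d) set) set" where
  "lattice_bracket_pairs \<mu> H m V = {(coord_prod A, lower_orthant (scalek k m)) | A k.
     (\<forall>j. A j \<in> H j) \<and> (\<forall>j. k$j \<le> m) \<and> measure \<mu> (sym_diff (coord_prod A) (lower_orthant (scalek k m))) \<le> V}"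

lemma lattice_bracket_pairs_subset:
  "lattice_bracket_pairs \<mu> H m V
     \<subseteq> (\<lambda>(A, k). (coord_prod A, lower_orthant (scalek k m))) ` (PiE UNIV H \<times> {k. \<forall>j. k$j \<le> m})"
  by (auto simp: lattice_bracket_pairs_def PiE_UNIV_domain)

lemma lattice_bracket_pairs_finite:
  assumes "\<And>j. finite (H j)"
  shows "finite (lattice_bracket_pairs \<mu> H m V)"
  using assms card_lattice_box(1)
  by (intro finite_subset[OF lattice_bracket_pairs_subset] finite_imageI finite_cartesian_product finite_PiE) auto

lemma card_lattice_bracket_pairs_le:
  fixes H :: "'d::finite \<Rightarrow> real set set"
  assumes "\<And>j. finite (H j)" "\<And>j. card (H j) \<le> c"
  shows "card (lattice_bracket_pairs \<mu> H m V) \<le> c ^ CARD('d) * (m + 1) ^ CARD('d)"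
proof -
  have fin: "finite (PiE UNIV H \<times> {k :: nat^'d. \<forall>j. k$j \<le> m})"
    using assms card_lattice_box(1) by (intro finite_cartesian_product finite_PiE) auto
  have "card (lattice_bracket_pairs \<mu> H m V)
      \<le> card ((\<lambda>(A, k). (coord_prod A, lower_orthant (scalek k m))) ` (PiE UNIV H \<times> {k :: nat^'d. \<forall>j. k$j \<le> m}))"
    by (rule card_mono[OF finite_imageI[OF fin] lattice_bracket_pairs_subset])
  also have "\<dots> \<le> card (PiE UNIV H) * card {k :: nat^'d. \<forall>j. k$j \<le> m}"
    using card_image_le[OF fin] by (simp add: card_cartesian_product)
  also have "\<dots> \<le> c ^ CARD('d) * (m + 1) ^ CARD('d)"
    using assms prod_mono[of UNIV "\<lambda>j. card (H j)" "\<lambda>_. c"]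
    by (simp add: card_PiE card_lattice_box(2))
  finally show ?thesis .
qed

lemma lattice_bracket_pairs_borel:
  assumes "\<And>j. H j \<subseteq> sets borel"
  shows "lattice_bracket_pairs \<mu> H m V \<subseteq> sets borel \<times> sets borel"
  using assms by (auto simp: lattice_bracket_pairs_def intro!: coord_prod_borel)

lemma lattice_increment_le:
  fixes \<mu> :: "(real^'d::finite) measure" and X :: "nat \<Rightarrow> 'a \<Rightarrow> real^'d"
  assumes "finite_measure \<mu>" and sets: "sets \<mu> = sets borel"
    and bracketing: "orthant_bracketing \<mu> H G" and Lip: "L-lipschitz_on simplexS (cdfv \<mu>)"
    and V: "G + 2 * (L * (real CARD('d) * alpha m)) \<le> V"
    and small: "\<forall>(P, Q)\<in>lattice_bracket_pairs \<mu> H m V.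
      \<bar>sample_deviation \<mu> X n \<omega> P - sample_deviation \<mu> X n \<omega> Q\<bar> < T"
    and n: "0 < n" and x: "x \<in> simplexS" and k: "k \<in> Nxm x m"
  shows "\<bar>empcdf X n \<omega> (scalek k m) - cdfv \<mu> (scalek k m) - empcdf X n \<omega> x + cdfv \<mu> x\<bar> \<le> T / real n + G"
proof -
  interpret finite_measure \<mu> by fact
  define a where "a = scalek k m"
  define D where "D = sample_deviation \<mu> X n \<omega>"
  obtain A B where AB: "\<forall>j. A j \<in> H j \<and> B j \<in> H j"
    and sub: "coord_prod A \<subseteq> lower_orthant x" "lower_orthant x \<subseteq> coord_prod B"
    and gap: "measure \<mu> (coord_prod B - coord_prod A) \<le> G"
    using bracketing unfolding orthant_bracketing_def by blast
  have measurable: "coord_prod A \<in> sets \<mu>" "coord_prod B \<in> sets \<mu>"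
      "lower_orthant x \<in> sets \<mu>" "lower_orthant a \<in> sets \<mu>"
    using bracketing AB by (auto simp: orthant_bracketing_def sets intro!: coord_prod_borel)
  have lip: "measure \<mu> (lower_orthant a - lower_orthant x) \<le> L * (real CARD('d) * alpha m)"
      "measure \<mu> (lower_orthant x - lower_orthant a) \<le> L * (real CARD('d) * alpha m)"
    using measure_lower_orthant_diff_le[OF finite_measure_axioms sets Lip] x
      scalek_in_simplexS[OF k] Nxm_abs_le[OF k] by (auto simp: a_def abs_minus_commute)
  have "\<bar>D P - D (lower_orthant a)\<bar> < T" if "P = coord_prod A \<or> P = coord_prod B" for P
  proof -
    have "coord_prod A \<subseteq> P" "P \<subseteq> coord_prod B"
      using that sub by auto
    then have "measure \<mu> (sym_diff P (lower_orthant a))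
        \<le> measure \<mu> (coord_prod B - coord_prod A) + measure \<mu> (lower_orthant x - lower_orthant a)
          + measure \<mu> (lower_orthant a - lower_orthant x)"
      using sub by (intro measure_sym_diff_le_bracket[OF finite_measure_axioms measurable])
    also have "\<dots> \<le> V"
      using gap lip V by linarith
    finally have "(P, lower_orthant a) \<in> lattice_bracket_pairs \<mu> H m V"
      using that AB Nxm_le[OF k] unfolding lattice_bracket_pairs_def a_def by blast
    then show ?thesis using small by (auto simp: D_def)
  qed
  then have "\<bar>D (lower_orthant a) - D (lower_orthant x)\<bar> \<le> T + real n * G"
    unfolding D_def
    by (intro sample_deviation_diff_le_bracket[OF finite_measure_axioms measurable(1,3,2) sub gap]) auto
  also have "D (lower_orthant a) - D (lower_orthant x)
      = real n * (empcdf X n \<omega> a - cdfv \<mu> a - empcdf X n \<omega> x + cdfv \<mu> x)"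
    using empcdf_deviation[of n X \<omega> a \<mu>] empcdf_deviation[of n X \<omega> x \<mu>]
    by (simp add: D_def algebra_simps)
  also have "T + real n * G = real n * (T / real n + G)"
    using n by (simp add: field_simps)
  finally show ?thesis
    using n by (simp add: a_def abs_mult)
qed

lemma lattice_increment_le_beta:
  fixes \<mu> :: "(real^'d::finite) measure" and X :: "nat \<Rightarrow> 'a \<Rightarrow> real^'d"
  assumes "finite_measure \<mu>" "sets \<mu> = sets borel"
    and "orthant_bracketing \<mu> H (real CARD('d) / real m)" "L-lipschitz_on simplexS (cdfv \<mu>)"
    and rates: "1 / real m \<le> beta n m" "beta n m \<le> alpha m" "0 < n"
    and small: "\<forall>(P, Q)\<in>lattice_bracket_pairs \<mu> H m ((real CARD('d) + 2 * L * real CARD('d)) * alpha m).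
      \<bar>sample_deviation \<mu> X n \<omega> P - sample_deviation \<mu> X n \<omega> Q\<bar> < real n * C * beta n m"
    and "x \<in> simplexS" "k \<in> Nxm x m"
  shows "\<bar>empcdf X n \<omega> (scalek k m) - cdfv \<mu> (scalek k m) - empcdf X n \<omega> x + cdfv \<mu> x\<bar>
         \<le> (C + real CARD('d)) * beta n m"
proof -
  have G: "real CARD('d) / real m \<le> real CARD('d) * beta n m"
    using mult_left_mono[OF rates(1), of "real CARD('d)"] by simp
  also have "\<dots> \<le> real CARD('d) * alpha m"
    using rates(2) by (simp add: mult_left_mono)
  finally have "real CARD('d) / real m + 2 * (L * (real CARD('d) * alpha m))
      \<le> (real CARD('d) + 2 * L * real CARD('d)) * alpha m"
    by (simp add: algebra_simps)
  then have "\<bar>empcdf X n \<omega> (scalek k m) - cdfv \<mu> (scalek k m) - empcdf X n \<omega> x + cdfv \<mu> x\<bar>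
      \<le> real n * C * beta n m / real n + real CARD('d) / real m"
    by (rule lattice_increment_le[OF assms(1-4) _ small rates(3) assms(9,10)])
  also have "\<dots> \<le> (C + real CARD('d)) * beta n m"
    using rates(3) G by (simp add: algebra_simps)
  finally show ?thesis .
qed

section \<open>Rates\<close>

lemma alpha_squared: "(alpha n)\<^sup>2 = ln (real n) / real n"
  by (cases "n = 0") (simp_all add: alpha_def)

lemma alpha_pos: "2 \<le> n \<Longrightarrow> 0 < alpha n"
  by (simp add: alpha_def)

lemma le_four_pow_four_if_beta_le_alpha:
  assumes m: "2 \<le> m" and n: "3 \<le> n" and beta: "beta n m \<le> alpha m"
  shows "real m \<le> 4 * real n ^ 4"
proof -
  have am: "0 < alpha m" by (rule alpha_pos[OF m])
  have "alpha n * sqrt (alpha m) \<le> sqrt (alpha m) * sqrt (alpha m)"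
    using beta am by (simp add: beta_def)
  then have "alpha n \<le> sqrt (alpha m)"
    using real_sqrt_gt_zero[OF am] by (rule mult_right_le_imp_le)
  moreover have "0 \<le> alpha n"
    by (cases "n = 0") (simp_all add: alpha_def)
  ultimately have "(alpha n)\<^sup>2 \<le> alpha m"
    using power_mono[of "alpha n" "sqrt (alpha m)" 2] am by simp
  moreover have "1 / real n \<le> ln (real n) / real n"
  proof (rule divide_right_mono)
    show "1 \<le> ln (real n)"
      using exp_bound[of 1] n by (subst ln_ge_iff) (auto intro: order_trans[of _ 3])
  qed simp
  ultimately have "1 / real n \<le> alpha m"
    by (simp add: alpha_squared)
  then have "(1 / real n)\<^sup>2 \<le> (alpha m)\<^sup>2"
    using n by (intro power_mono) auto
  also have "(alpha m)\<^sup>2 \<le> 2 / sqrt (real m)"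
  proof -
    have "ln (sqrt (real m)) \<le> sqrt (real m) - 1"
      using m by (intro ln_le_minus_one) auto
    then have "ln (real m) \<le> 2 * sqrt (real m)"
      using m by (simp add: ln_sqrt)
    then have "ln (real m) / real m \<le> 2 * sqrt (real m) / real m"
      using m by (intro divide_right_mono) auto
    also have "\<dots> = 2 / sqrt (real m)"
      using m by (simp add: field_simps)
    finally show ?thesis
      by (simp add: alpha_squared)
  qed
  finally have "1 / (real n)\<^sup>2 \<le> 2 / sqrt (real m)"
    by (simp add: power_divide)
  then have "sqrt (real m) \<le> 2 * (real n)\<^sup>2"
    using n m by (simp add: divide_le_eq le_divide_eq mult.commute)
  then have "(sqrt (real m))\<^sup>2 \<le> (2 * (real n)\<^sup>2)\<^sup>2"
    by (intro power_mono) auto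
  then show ?thesis
    by (simp add: power2_eq_square eval_nat_numeral)
qed

lemma lattice_count_le:
  assumes n: "3 \<le> n" and m: "real m \<le> 4 * real n ^ 4"
  shows "real ((2 * m) ^ d * (m + 1) ^ d) \<le> real n ^ (12 * d)"
proof -
  have "real (2 * m) * real (m + 1) \<le> 4 * (real m)\<^sup>2"
  proof (cases "m = 0")
    case False
    then have "real (2 * m) * real (m + 1) \<le> real (2 * m) * (2 * real m)"
      by (intro mult_left_mono) auto
    then show ?thesis by (simp add: power2_eq_square)
  qed simp
  also have "\<dots> \<le> 4 * (4 * real n ^ 4)\<^sup>2"
    using m by (intro mult_left_mono power_mono) auto
  also have "\<dots> = 64 * real n ^ 8"
    by (simp add: power2_eq_square flip: power_add)
  also have "\<dots> \<le> real n ^ 4 * real n ^ 8"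
    using power_mono[of 3 "real n" 4] n by (intro mult_right_mono) auto
  finally have "real (2 * m) * real (m + 1) \<le> real n ^ 12"
    by (simp flip: power_add)
  then have "(real (2 * m) * real (m + 1)) ^ d \<le> (real n ^ 12) ^ d"
    by (intro power_mono) auto
  then show ?thesis
    by (simp add: power_mult_distrib power_mult)
qed

lemma beta_exponent_eq:
  assumes "2 \<le> m"
  shows "- (beta n m / alpha m) * (real n * C * beta n m) + real n * (beta n m / alpha m)\<^sup>2 * (c * alpha m)
         = - (C - c) * ln (real n)"
proof -
  have "real n * (beta n m)\<^sup>2 / alpha m = ln (real n)"
    using alpha_pos[OF assms] by (cases "n = 0") (simp_all add: beta_def power_mult_distrib alpha_squared)
  then show ?thesis
    using alpha_pos[OF assms] by (simp add: power2_eq_square field_simps)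
qed

lemma summable_lattice_rate:
  fixes N :: "nat \<Rightarrow> nat"
  assumes "eventually (\<lambda>n. 2 \<le> m n \<and> beta n (m n) \<le> alpha (m n) \<and> N n \<le> (2 * m n) ^ d * (m n + 1) ^ d)
             sequentially"
  shows "summable (\<lambda>n. real (N n) * exp (- real (12 * d + 2) * ln (real n)))"
proof (rule summable_comparison_test_ev[OF _ inverse_power_summable[of 2]])
  show "eventually (\<lambda>n. norm (real (N n) * exp (- real (12 * d + 2) * ln (real n))) \<le> inverse (real n ^ 2))
      sequentially"
    using assms eventually_ge_at_top[of 3]
  proof eventually_elim
    case (elim n)
    then have "real (N n) \<le> real ((2 * m n) ^ d * (m n + 1) ^ d)"
      by (simp only: of_nat_le_iff)
    also have "\<dots> \<le> real n ^ (12 * d)"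
      using elim by (intro lattice_count_le le_four_pow_four_if_beta_le_alpha) auto
    finally have count: "real (N n) \<le> real n ^ (12 * d)" .
    have "exp (- real (12 * d + 2) * ln (real n)) = inverse (exp (ln (real n)) ^ (12 * d + 2))"
      by (simp only: mult_minus_left exp_minus exp_of_nat_mult)
    then have "norm (real (N n) * exp (- real (12 * d + 2) * ln (real n))) = real (N n) / real n ^ (12 * d + 2)"
      using elim by (simp add: divide_inverse)
    also have "\<dots> \<le> real n ^ (12 * d) / real n ^ (12 * d + 2)"
      using count by (intro divide_right_mono) auto
    also have "\<dots> = inverse (real n ^ 2)"
      using elim by (simp add: power_add field_simps power2_eq_square)
    finally show ?case .
  qed
qed simp

lemma summable_lattice_bernstein_bound:
  fixes N :: "nat \<Rightarrow> nat"
  assumes "eventually (\<lambda>n. 2 \<le> m n \<and> beta n (m n) \<le> alpha (m n) \<and> N n \<le> (2 * m n) ^ d * (m n + 1) ^ d)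
             sequentially"
  shows "summable (\<lambda>n. real (N n) * exp (- (beta n (m n) / alpha (m n)) * (real n * (c + real (12 * d + 2)) * beta n (m n))
           + real n * (beta n (m n) / alpha (m n))\<^sup>2 * (c * alpha (m n))))"
proof -
  have "eventually (\<lambda>n. real (N n) * exp (- real (12 * d + 2) * ln (real n))
      = real (N n) * exp (- (beta n (m n) / alpha (m n)) * (real n * (c + real (12 * d + 2)) * beta n (m n))
          + real n * (beta n (m n) / alpha (m n))\<^sup>2 * (c * alpha (m n)))) sequentially"
    using assms
  proof eventually_elim
    case (elim n)
    then have "- (beta n (m n) / alpha (m n)) * (real n * (c + real (12 * d + 2)) * beta n (m n))
        + real n * (beta n (m n) / alpha (m n))\<^sup>2 * (c * alpha (m n))
        = - (c + real (12 * d + 2) - c) * ln (real n)"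
      by (intro beta_exponent_eq) auto
    then show ?case
      by simp
  qed
  then show ?thesis
    using summable_lattice_rate[OF assms] summable_cong by fast
qed

lemma AE_eventually_lattice_deviations_less:
  fixes \<mu> :: "(real^'d::finite) measure" and X :: "nat \<Rightarrow> 'a \<Rightarrow> real^'d"
  assumes "iid_sample M \<mu> X"
    and rates: "eventually (\<lambda>n. 2 \<le> m n \<and> 1 / real (m n) \<le> beta n (m n) \<and> beta n (m n) \<le> alpha (m n))
      sequentially"
    and H: "\<And>n j. 0 < m n \<Longrightarrow> finite (H n j) \<and> H n j \<subseteq> sets borel \<and> card (H n j) \<le> 2 * m n"
  shows "AE \<omega> in M. eventually (\<lambda>n. \<forall>(P, Q)\<in>lattice_bracket_pairs \<mu> (H n) (m n) (c * alpha (m n)).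
           \<bar>sample_deviation \<mu> X n \<omega> P - sample_deviation \<mu> X n \<omega> Q\<bar>
             < real n * (c + real (12 * CARD('d) + 2)) * beta n (m n)) sequentially"
proof -
  interpret iid_sample M \<mu> X by fact
  define \<P> where "\<P> n = lattice_bracket_pairs \<mu> (H n) (m n) (c * alpha (m n))" for n
  have "AE \<omega> in M. eventually (\<lambda>n. \<forall>(P, Q)\<in>\<P> n. \<bar>sample_deviation \<mu> X n \<omega> P - sample_deviation \<mu> X n \<omega> Q\<bar>
      < real n * (c + real (12 * CARD('d) + 2)) * beta n (m n)) sequentially"
  \<comment> \<open>With lambda = beta/alpha and variance proxy c alpha both terms of the exponent are multiples of ln n.\<close>
  proof (rule AE_eventually_deviations_less[where l="\<lambda>n. beta n (m n) / alpha (m n)" and V="\<lambda>n. c * alpha (m n)"])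
    show "eventually (\<lambda>n. finite (\<P> n) \<and> \<P> n \<subseteq> sets borel \<times> sets borel
        \<and> 0 < beta n (m n) / alpha (m n) \<and> beta n (m n) / alpha (m n) \<le> 1
        \<and> (\<forall>(P, Q)\<in>\<P> n. measure \<mu> (sym_diff P Q) \<le> c * alpha (m n))) sequentially"
      using rates
    proof eventually_elim
      case (elim n)
      then have "0 < beta n (m n)" "0 < alpha (m n)"
        using alpha_pos[of "m n"] by (auto intro: less_le_trans[of 0 "1 / real (m n)"])
      then show ?case
        using elim H[of n] by (auto simp: \<P>_def lattice_bracket_pairs_finite lattice_bracket_pairs_borel)
          (auto simp: lattice_bracket_pairs_def)
    qed
    show "summable (\<lambda>n. real (card (\<P> n)) * exp (- (beta n (m n) / alpha (m n))
        * (real n * (c + real (12 * CARD('d) + 2)) * beta n (m n))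
        + real n * (beta n (m n) / alpha (m n))\<^sup>2 * (c * alpha (m n))))"
      using rates
    proof (intro summable_lattice_bernstein_bound, eventually_elim)
      case (elim n)
      then show ?case
        using H[of n] card_lattice_bracket_pairs_le[of "H n" "2 * m n"] by (simp add: \<P>_def)
    qed
  qed
  then show ?thesis
    by (simp add: \<P>_def)
qed

theorem lemma1:
  fixes M :: "'a measure" and \<mu> :: "(real^'d::finite) measure"
    and X :: "nat \<Rightarrow> 'a \<Rightarrow> real^'d" and m :: "nat \<Rightarrow> nat"
  assumes "prob_space M"
    and "prob_space.indep_vars M (\<lambda>_. borel) X UNIV"
    and "\<And>i. distr M borel (X i) = \<mu>"
    and "\<And>i. X i \<in> borel_measurable M"
    and "measure \<mu> simplexS = 1"
    and "\<exists>L. L-lipschitz_on simplexS (cdfv \<mu>)"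
    and "eventually (\<lambda>n. 2 \<le> m n \<and> 1 / real (m n) \<le> beta n (m n)
                          \<and> beta n (m n) \<le> alpha (m n)) sequentially"
  shows "AE \<omega> in M. \<exists>C. eventually (\<lambda>n. \<forall>x\<in>simplexInt. \<forall>k\<in>Nxm x (m n).
           \<bar>empcdf X n \<omega> (scalek k (m n)) - cdfv \<mu> (scalek k (m n))
             - empcdf X n \<omega> x + cdfv \<mu> x\<bar> \<le> C * beta n (m n)) sequentially"
proof -
  interpret iid_sample M \<mu> X
    using assms(1-4) by (intro iid_sample.intro iid_sample_axioms.intro) auto
  interpret mu: prob_space \<mu> by (rule prob_space_mu)
  obtain L where Lip: "L-lipschitz_on simplexS (cdfv \<mu>)" using assms(6) by blast
  define c where "c = real CARD('d) + 2 * L * real CARD('d)"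
  define C where "C = c + real (12 * CARD('d) + 2)"
  have "\<forall>n. \<exists>H. 0 < m n \<longrightarrow> orthant_bracketing \<mu> H (real CARD('d) / real (m n)) \<and> (\<forall>j. card (H j) \<le> 2 * m n)"
    using exists_orthant_bracketing[OF prob_space_mu sets_mu] by simp
  then obtain H where H: "\<And>n. 0 < m n \<Longrightarrow> orthant_bracketing \<mu> (H n) (real CARD('d) / real (m n))"
    "\<And>n j. 0 < m n \<Longrightarrow> card (H n j) \<le> 2 * m n"
    by metis
  have "AE \<omega> in M. eventually (\<lambda>n. \<forall>(P, Q)\<in>lattice_bracket_pairs \<mu> (H n) (m n) (c * alpha (m n)).
      \<bar>sample_deviation \<mu> X n \<omega> P - sample_deviation \<mu> X n \<omega> Q\<bar> < real n * C * beta n (m n)) sequentially"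
    using AE_eventually_lattice_deviations_less[OF iid_sample_axioms assms(7), of H c] H
    by (simp add: orthant_bracketing_def C_def)
  then show ?thesis
  proof (rule eventually_mono)
    fix \<omega>
    assume "eventually (\<lambda>n. \<forall>(P, Q)\<in>lattice_bracket_pairs \<mu> (H n) (m n) (c * alpha (m n)).
      \<bar>sample_deviation \<mu> X n \<omega> P - sample_deviation \<mu> X n \<omega> Q\<bar> < real n * C * beta n (m n)) sequentially"
    with assms(7) eventually_gt_at_top[of 0]
    have "eventually (\<lambda>n. \<forall>x\<in>simplexInt. \<forall>k\<in>Nxm x (m n). \<bar>empcdf X n \<omega> (scalek k (m n)) - cdfv \<mu> (scalek k (m n))
             - empcdf X n \<omega> x + cdfv \<mu> x\<bar> \<le> (C + real CARD('d)) * beta n (m n)) sequentially"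
      by eventually_elim (use H(1) simplexInt_subset_simplexS in
          \<open>auto intro!: lattice_increment_le_beta[OF mu.finite_measure_axioms sets_mu _ Lip] simp: c_def\<close>)
    then show "\<exists>C. eventually (\<lambda>n. \<forall>x\<in>simplexInt. \<forall>k\<in>Nxm x (m n). \<bar>empcdf X n \<omega> (scalek k (m n))
        - cdfv \<mu> (scalek k (m n)) - empcdf X n \<omega> x + cdfv \<mu> x\<bar> \<le> C * beta n (m n)) sequentially"
      by blast
  qed
qed

end
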